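(* Let $F$ be the field with two elements and $R$ the ring of all functions $\mathbb{N}\to F$ with pointwise operations. Let $I\subseteq R$ be the ideal of all finitely supported functions, and let $M$ be any maximal proper ideal of $R$ with $I\subseteq M$. Then $E=M$ is a set of local units for the ring $M$, but $M$ does not have enough idempotents.
   Context: For $a,b$ in a ring put $a\vee b=a+b-ab$. A set of local units for a ring $S$ is a set $E\subseteq S$ of pairwise commuting idempotents, closed under $\vee$, such that for every $s\in S$ there is $e\in E$ with $es=se=s$. A ring $S$ has enough idempotents if there is a set $\{e_i\}_{i\in I}$ of pairwise orthogonal idempotents in $S$ (i.e. $e_i^2=e_i$ and $e_ie_j=e_je_i=0$ for $i\neq j$) such that $S=\bigoplus_{i\in I} Se_i=\bigoplus_{i\in I} e_iS$. *)

theory Defs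
  imports Main "HOL-Library.Z2" "HOL-Library.Function_Algebras"
begin

text \<open>Rings are treated as subsets S of an ambient (not necessarily unital) ring type,
  closed under the operations; S inherits the ambient operations.\<close>

definition is_ideal :: "'a::ring set \<Rightarrow> bool" where
  "is_ideal J \<longleftrightarrow> 0 \<in> J \<and> (\<forall>x\<in>J. \<forall>y\<in>J. x + y \<in> J) \<and> (\<forall>x\<in>J. - x \<in> J)
     \<and> (\<forall>r x. x \<in> J \<longrightarrow> r * x \<in> J \<and> x * r \<in> J)"

definition maximal_ideal :: "'a::ring set \<Rightarrow> bool" where
  "maximal_ideal M \<longleftrightarrow> is_ideal M \<and> M \<noteq> UNIV \<and>
     (\<forall>J. is_ideal J \<and> M \<subseteq> J \<longrightarrow> J = M \<or> J = UNIV)"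

definition join :: "'a::ring \<Rightarrow> 'a \<Rightarrow> 'a" where
  "join a b = a + b - a * b"

definition local_units :: "'a::ring set \<Rightarrow> 'a set \<Rightarrow> bool" where
  "local_units S E \<longleftrightarrow> E \<subseteq> S \<and> (\<forall>e\<in>E. e * e = e) \<and> (\<forall>e\<in>E. \<forall>f\<in>E. e * f = f * e)
     \<and> (\<forall>e\<in>E. \<forall>f\<in>E. join e f \<in> E) \<and> (\<forall>s\<in>S. \<exists>e\<in>E. e * s = s \<and> s * e = s)"

definition internal_dsum :: "'a::ring set \<Rightarrow> 'b set \<Rightarrow> ('b \<Rightarrow> 'a set) \<Rightarrow> bool" where
  "internal_dsum S P A \<longleftrightarrow>
     (\<forall>f. (\<forall>j. j \<notin> P \<longrightarrow> f j = 0) \<and> finite {j. f j \<noteq> 0} \<and> (\<forall>j\<in>P. f j \<in> A j)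
          \<longrightarrow> sum f {j. f j \<noteq> 0} \<in> S) \<and>
     (\<forall>s\<in>S. \<exists>!f. (\<forall>j. j \<notin> P \<longrightarrow> f j = 0) \<and> finite {j. f j \<noteq> 0} \<and> (\<forall>j\<in>P. f j \<in> A j)
          \<and> s = sum f {j. f j \<noteq> 0})"

text \<open>S has enough idempotents: there is a family (here: a set, indexing by itself) of
  pairwise orthogonal idempotents e in S with S = (+) S e = (+) e S.\<close>
definition enough_idempotents :: "'a::ring set \<Rightarrow> bool" where
  "enough_idempotents S \<longleftrightarrow> (\<exists>P. P \<subseteq> S \<and> (\<forall>e\<in>P. e * e = e) \<and>
     (\<forall>e\<in>P. \<forall>f\<in>P. e \<noteq> f \<longrightarrow> e * f = 0 \<and> f * e = 0) \<and>
     internal_dsum S P (\<lambda>e. {s * e | s. s \<in> S}) \<and>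
     internal_dsum S P (\<lambda>e. {e * s | s. s \<in> S}))"

end

theory Submission
  imports Defs "HOL-Library.Infinite_Set"
begin

text \<open>
  The ring of functions into the two-element field is Boolean, so every element of the ideal
  \<open>M\<close> is an idempotent serving as a local unit for itself, and \<open>M\<close> is closed under \<open>\<or>\<close>.
  Suppose \<open>M = \<Oplus> M e\<close> for a family \<open>P\<close> of orthogonal idempotents. The nonzero members of \<open>P\<close>
  have pairwise disjoint supports, and the decomposition of any \<open>s \<in> M\<close> covers the support
  of \<open>s\<close> by finitely many of them; hence only finitely many members of \<open>P\<close> have support
  inside that of \<open>s\<close>. Since \<open>M\<close> contains the point indicators, the supports of \<open>P\<close> cover
  every point. If \<open>P\<close> were finite, its join would be \<open>1 \<in> M\<close>. If it is infinite, split it into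
  two infinite halves and let \<open>g\<close> be the join of the first; by maximality \<open>g \<in> M\<close> or
  \<open>1 - g \<in> M\<close>, and either lies above infinitely many members of \<open>P\<close>.
\<close>

lemma bit_fun_mult_self [simp]: "(f :: 'a \<Rightarrow> bit) * f = f"
  by (rule ext) simp

lemma sum_fun_apply: "sum f F x = (\<Sum>j\<in>F. f j x)"
  by (induction F rule: infinite_finite_induct) auto

lemma infinite_set_splits:
  assumes "infinite Q"
  obtains A where "A \<subseteq> Q" "infinite A" "infinite (Q - A)"
proof -
  obtain q :: "nat \<Rightarrow> _" where q: "inj q" "range q \<subseteq> Q"
    using infinite_iff_countable_subset[THEN iffD1, OF assms] by blast
  let ?A = "range (\<lambda>k. q (2 * k))" and ?B = "range (\<lambda>k. q (2 * k + 1))"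
  have "inj (\<lambda>k. q (2 * k))" "inj (\<lambda>k. q (2 * k + 1))"
    by (simp_all add: inj_def inj_eq[OF q(1)])
  then have "infinite ?A" "infinite ?B"
    by (simp_all add: range_inj_infinite)
  have "q (2 * k + 1) \<notin> ?A" for k
  proof
    assume "q (2 * k + 1) \<in> ?A"
    then obtain j where "q (2 * k + 1) = q (2 * j)" by blast
    then have "2 * k + 1 = 2 * j" by (rule injD[OF q(1)])
    then show False by presburger
  qed
  then have "?B \<subseteq> Q - ?A" using q(2) by auto
  then have "infinite (Q - ?A)" using \<open>infinite ?B\<close> by (rule infinite_super)
  moreover have "?A \<subseteq> Q" using q(2) by auto
  ultimately show ?thesis using that \<open>infinite ?A\<close> by blast
qed

lemma
  assumes "is_ideal J"
  shows ideal_zero: "0 \<in> J"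
    and ideal_add: "x \<in> J \<Longrightarrow> y \<in> J \<Longrightarrow> x + y \<in> J"
    and ideal_uminus: "x \<in> J \<Longrightarrow> - x \<in> J"
    and ideal_mult_left: "x \<in> J \<Longrightarrow> r * x \<in> J"
  using assms by (simp_all add: is_ideal_def)

lemma ideal_join_closed:
  assumes "is_ideal J" "e \<in> J" "f \<in> J"
  shows "join e f \<in> J"
  unfolding join_def diff_conv_add_uminus
  by (intro ideal_add ideal_uminus ideal_mult_left assms)

lemma local_units_of_idempotent_ideal:
  fixes M :: "'a::comm_ring set"
  assumes "is_ideal M" and idem: "\<And>x. x \<in> M \<Longrightarrow> x * x = x"
  shows "local_units M M"
  unfolding local_units_def
proof (intro conjI ballI)
  show "M \<subseteq> M" ..
next
  fix e assume "e \<in> M"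
  then show "e * e = e" by (rule idem)
next
  fix e f :: 'a
  show "e * f = f * e" by (rule mult.commute)
next
  fix e f assume "e \<in> M" "f \<in> M"
  with assms(1) show "join e f \<in> M" by (rule ideal_join_closed)
next
  fix s assume "s \<in> M"
  with idem[OF this] show "\<exists>e\<in>M. e * s = s \<and> s * e = s" by blast
qed

lemma maximal_ideal_one_notin:
  fixes M :: "'a::ring_1 set"
  assumes "maximal_ideal M"
  shows "1 \<notin> M"
proof
  assume "1 \<in> M"
  have M: "is_ideal M" "M \<noteq> UNIV" using assms by (simp_all add: maximal_ideal_def)
  have "r \<in> M" for r
    using ideal_mult_left[OF M(1) \<open>1 \<in> M\<close>, of r] by simp
  with M(2) show False by blast
qed

lemma ideal_plus_multiples:
  fixes M :: "'a::comm_ring set"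
  assumes M: "is_ideal M"
  shows "is_ideal {m + r * e | m r. m \<in> M}"
  unfolding is_ideal_def
proof (intro conjI allI ballI impI)
  let ?J = "{m + r * e | m r. m \<in> M}"
  have J: "m + r * e \<in> ?J" if "m \<in> M" for m r using that by blast
  show "0 \<in> ?J" using J[OF ideal_zero[OF M], of 0] by (simp only: mult_zero_left add_0_right)
  fix x assume "x \<in> ?J"
  then obtain m r where x: "x = m + r * e" "m \<in> M" by blast
  have "- x = - m + (- r) * e" using x(1) by simp
  then show "- x \<in> ?J" using J[OF ideal_uminus[OF M x(2)]] by (simp only:)
  fix s
  have "s * x = s * m + (s * r) * e" using x(1) by (simp add: algebra_simps)
  then show "s * x \<in> ?J" using J[OF ideal_mult_left[OF M x(2)]] by (simp only:)
  then show "x * s \<in> ?J" by (simp only: mult.commute)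
  fix y assume "y \<in> ?J"
  then obtain m' r' where y: "y = m' + r' * e" "m' \<in> M" by blast
  have "x + y = (m + m') + (r + r') * e" using x(1) y(1) by (simp add: algebra_simps)
  then show "x + y \<in> ?J" using J[OF ideal_add[OF M x(2) y(2)]] by (simp only:)
qed

lemma maximal_ideal_complement_idempotent:
  fixes M :: "'a::comm_ring_1 set"
  assumes max: "maximal_ideal M" and idem: "e * e = e" and "e \<notin> M"
  shows "1 - e \<in> M"
proof -
  let ?J = "{m + r * e | m r. m \<in> M}"
  have M: "is_ideal M" and maximal: "\<And>J. is_ideal J \<Longrightarrow> M \<subseteq> J \<Longrightarrow> J = M \<or> J = UNIV"
    using max by (simp_all add: maximal_ideal_def)
  have J: "m + r * e \<in> ?J" if "m \<in> M" for m r using that by blast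
  have "M \<subseteq> ?J" using J[of _ 0] by (simp only: mult_zero_left add_0_right subsetI)
  moreover have "e \<in> ?J" using J[OF ideal_zero[OF M], of 1] by (simp only: mult_1_left add_0_left)
  ultimately have "?J = UNIV"
    using maximal[OF ideal_plus_multiples[OF M]] \<open>e \<notin> M\<close> by blast
  then have "1 \<in> ?J" by simp
  then obtain m r where m: "m \<in> M" "1 = m + r * e" by blast
  have "(1 - e) * (r * e) = r * (e - e * e)" by (simp add: algebra_simps)
  also have "\<dots> = 0" using idem by simp
  finally have "(1 - e) * m = (1 - e) * (m + r * e)" by (simp add: distrib_left)
  also have "\<dots> = 1 - e" using m(2) by simp
  finally have "(1 - e) * m = 1 - e" .
  with ideal_mult_left[OF M m(1), of "1 - e"] show ?thesis by simp
qed

definition Join :: "('a \<Rightarrow> bit) set \<Rightarrow> 'a \<Rightarrow> bit" where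
  "Join F n = (if \<exists>q\<in>F. q n \<noteq> 0 then 1 else 0)"

lemma Join_empty [simp]: "Join {} = 0"
  by (simp add: Join_def fun_eq_iff)

lemma Join_insert: "Join (insert q F) = join q (Join F)"
proof
  fix n
  show "Join (insert q F) n = join q (Join F) n"
    by (cases "q n") (auto simp: Join_def join_def)
qed

lemma ideal_Join_closed:
  assumes "is_ideal M" "finite F" "F \<subseteq> M"
  shows "Join F \<in> M"
  using assms(2,3)
proof (induction F rule: finite_induct)
  case empty
  show ?case unfolding Join_empty by (rule ideal_zero[OF assms(1)])
next
  case (insert q F)
  then have "q \<in> M" "Join F \<in> M" by simp_all
  then show ?case unfolding Join_insert by (rule ideal_join_closed[OF assms(1)])
qed

lemma internal_dsum_support_cover:
  fixes M :: "('a \<Rightarrow> 'b::ring) set"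
  assumes dsum: "internal_dsum M P (\<lambda>e. {s * e | s. s \<in> M})" and "s \<in> M"
  obtains F where "finite F" "F \<subseteq> P - {0}" "\<And>n. s n \<noteq> 0 \<Longrightarrow> \<exists>j\<in>F. j n \<noteq> 0"
proof -
  from dsum have "\<forall>s\<in>M. \<exists>!c. (\<forall>j. j \<notin> P \<longrightarrow> c j = 0) \<and> finite {j. c j \<noteq> 0}
      \<and> (\<forall>j\<in>P. c j \<in> {t * j | t. t \<in> M}) \<and> s = sum c {j. c j \<noteq> 0}"
    unfolding internal_dsum_def by (rule conjunct2)
  from ex1_implies_ex[OF bspec[OF this \<open>s \<in> M\<close>]]
  obtain c where c0: "\<forall>j. j \<notin> P \<longrightarrow> c j = 0" and cfin: "finite {j. c j \<noteq> 0}"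
    and cP: "\<forall>j\<in>P. c j \<in> {t * j | t. t \<in> M}" and s: "s = sum c {j. c j \<noteq> 0}"
    by blast
  have factor: "j \<in> P - {0} \<and> j n \<noteq> 0" if "c j n \<noteq> 0" for j n
  proof -
    have "j \<in> P" using that c0 by force
    then obtain t where "c j = t * j" using cP by blast
    then show ?thesis using that \<open>j \<in> P\<close> by auto
  qed
  show ?thesis
  proof
    show "finite {j. c j \<noteq> 0}" by (fact cfin)
    show "{j. c j \<noteq> 0} \<subseteq> P - {0}" using factor by (force simp: fun_eq_iff)
    fix n assume "s n \<noteq> 0"
    then have sum_nonzero: "(\<Sum>j\<in>{j. c j \<noteq> 0}. c j n) \<noteq> 0" using s by (simp add: sum_fun_apply)
    have "\<exists>j\<in>{j. c j \<noteq> 0}. c j n \<noteq> 0"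
    proof (rule ccontr)
      assume "\<not> (\<exists>j\<in>{j. c j \<noteq> 0}. c j n \<noteq> 0)"
      then have "(\<Sum>j\<in>{j. c j \<noteq> 0}. c j n) = 0" by (intro sum.neutral) blast
      with sum_nonzero show False by contradiction
    qed
    then show "\<exists>j\<in>{j. c j \<noteq> 0}. j n \<noteq> 0" using factor by blast
  qed
qed

lemma member_below_in_cover:
  fixes s :: "'a \<Rightarrow> 'b::semiring_no_zero_divisors" and Q :: "('a \<Rightarrow> 'b) set"
  assumes orth: "pairwise (\<lambda>e f. e * f = 0) Q" and "F \<subseteq> Q"
    and cover: "\<And>n. s n \<noteq> 0 \<Longrightarrow> \<exists>j\<in>F. j n \<noteq> 0"
    and "q \<in> Q" "q \<noteq> 0" and below: "{n. q n \<noteq> 0} \<subseteq> {n. s n \<noteq> 0}"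
  shows "q \<in> F"
proof -
  obtain n where n: "q n \<noteq> 0" using \<open>q \<noteq> 0\<close> by (auto simp: fun_eq_iff)
  then obtain j where j: "j \<in> F" "j n \<noteq> 0" using below cover by blast
  have "q * j \<noteq> 0"
  proof
    assume "q * j = 0"
    then have "q n * j n = 0" by (metis times_fun_apply zero_fun_apply)
    with n j(2) show False by simp
  qed
  then have "q = j" using orth \<open>F \<subseteq> Q\<close> \<open>q \<in> Q\<close> j(1) unfolding pairwise_def by blast
  then show ?thesis using j(1) by simp
qed

lemma internal_dsum_finitely_many_below:
  fixes M :: "('a \<Rightarrow> 'b::ring_no_zero_divisors) set"
  assumes dsum: "internal_dsum M P (\<lambda>e. {s * e | s. s \<in> M})"
    and orth: "pairwise (\<lambda>e f. e * f = 0) P" and "s \<in> M"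
  shows "finite {q \<in> P - {0}. {n. q n \<noteq> 0} \<subseteq> {n. s n \<noteq> 0}}"
proof -
  obtain F where F: "finite F" "F \<subseteq> P - {0}" "\<And>n. s n \<noteq> 0 \<Longrightarrow> \<exists>j\<in>F. j n \<noteq> 0"
    using internal_dsum_support_cover[OF dsum \<open>s \<in> M\<close>] by blast
  have "pairwise (\<lambda>e f. e * f = 0) (P - {0})" using orth Diff_subset by (rule pairwise_subset)
  then have "{q \<in> P - {0}. {n. q n \<noteq> 0} \<subseteq> {n. s n \<noteq> 0}} \<subseteq> F"
    using member_below_in_cover[OF _ F(2) F(3)] by blast
  then show ?thesis using F(1) by (rule finite_subset)
qed

lemma maximal_ideal_above_infinitely_many:
  fixes M Q :: "('a \<Rightarrow> bit) set"
  assumes max: "maximal_ideal M" and "infinite Q" and orth: "pairwise (\<lambda>e f. e * f = 0) Q"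
  obtains s where "s \<in> M" "infinite {q \<in> Q. {n. q n \<noteq> 0} \<subseteq> {n. s n \<noteq> 0}}"
proof -
  obtain A where A: "A \<subseteq> Q" "infinite A" "infinite (Q - A)"
    using infinite_set_splits[OF \<open>infinite Q\<close>] by blast
  have below: "A \<subseteq> {q \<in> Q. {n. q n \<noteq> 0} \<subseteq> {n. Join A n \<noteq> 0}}"
  proof
    fix q assume "q \<in> A"
    then have "{n. q n \<noteq> 0} \<subseteq> {n. Join A n \<noteq> 0}" by (auto simp: Join_def)
    with \<open>q \<in> A\<close> A(1) show "q \<in> {q \<in> Q. {n. q n \<noteq> 0} \<subseteq> {n. Join A n \<noteq> 0}}" by blast
  qed
  have below_complement: "Q - A \<subseteq> {q \<in> Q. {n. q n \<noteq> 0} \<subseteq> {n. (1 - Join A) n \<noteq> 0}}"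
  proof
    fix q assume q: "q \<in> Q - A"
    have "(1 - Join A) n \<noteq> 0" if "q n \<noteq> 0" for n
    proof -
      have "a n = 0" if "a \<in> A" for a
      proof -
        have "a \<noteq> q" "a \<in> Q" using q \<open>a \<in> A\<close> A(1) by auto
        then have "a * q = 0" using pairwiseD[OF orth] q by simp
        then have "a n * q n = 0" by (metis times_fun_apply zero_fun_apply)
        then show ?thesis using \<open>q n \<noteq> 0\<close> by simp
      qed
      then show ?thesis by (simp add: Join_def)
    qed
    with q show "q \<in> {q \<in> Q. {n. q n \<noteq> 0} \<subseteq> {n. (1 - Join A) n \<noteq> 0}}" by blast
  qed
  have "Join A \<in> M \<or> 1 - Join A \<in> M"
    using maximal_ideal_complement_idempotent[OF max bit_fun_mult_self] by blast
  then show ?thesis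
  proof
    assume "Join A \<in> M"
    then show ?thesis using infinite_super[OF below A(2)] by (rule that)
  next
    assume "1 - Join A \<in> M"
    then show ?thesis using infinite_super[OF below_complement A(3)] by (rule that)
  qed
qed

lemma not_enough_idempotents_of_maximal:
  fixes M :: "('a \<Rightarrow> bit) set"
  assumes max: "maximal_ideal M" and fin: "{f. finite {n. f n \<noteq> 0}} \<subseteq> M"
  shows "\<not> enough_idempotents M"
proof
  have M: "is_ideal M" using max by (simp add: maximal_ideal_def)
  assume "enough_idempotents M"
  then obtain P where P: "P \<subseteq> M \<and> (\<forall>e\<in>P. e * e = e) \<and>
     (\<forall>e\<in>P. \<forall>f\<in>P. e \<noteq> f \<longrightarrow> e * f = 0 \<and> f * e = 0) \<and>
     internal_dsum M P (\<lambda>e. {s * e | s. s \<in> M}) \<and> internal_dsum M P (\<lambda>e. {e * s | s. s \<in> M})"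
    unfolding enough_idempotents_def ..
  then have "P \<subseteq> M" and dsum: "internal_dsum M P (\<lambda>e. {s * e | s. s \<in> M})"
    and orth_P: "pairwise (\<lambda>e f. e * f = 0) P"
    unfolding pairwise_def by blast+
  let ?Q = "P - {0}"
  have orth: "pairwise (\<lambda>e f. e * f = 0) ?Q" using orth_P Diff_subset by (rule pairwise_subset)
  have "infinite ?Q"
  proof
    assume "finite ?Q"
    have "Join ?Q = 1"
    proof
      fix n :: 'a
      let ?point = "\<lambda>m. if m = n then 1 else 0 :: bit"
      have "?point \<in> M" using fin by auto
      then obtain F where "finite F" "F \<subseteq> ?Q" and cover: "\<And>m. ?point m \<noteq> 0 \<Longrightarrow> \<exists>j\<in>F. j m \<noteq> 0"
        by (rule internal_dsum_support_cover[OF dsum]) (rule that)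
      have "\<exists>j\<in>F. j n \<noteq> 0" using cover[of n] by simp
      with \<open>F \<subseteq> ?Q\<close> have "\<exists>j\<in>?Q. j n \<noteq> 0" by blast
      then show "Join ?Q n = 1 n" by (simp add: Join_def)
    qed
    moreover have "Join ?Q \<in> M"
      using \<open>P \<subseteq> M\<close> by (intro ideal_Join_closed[OF M \<open>finite ?Q\<close>]) blast
    ultimately show False using maximal_ideal_one_notin[OF max] by simp
  qed
  then obtain s where "s \<in> M" "infinite {q \<in> ?Q. {n. q n \<noteq> 0} \<subseteq> {n. s n \<noteq> 0}}"
    by (rule maximal_ideal_above_infinitely_many[OF max _ orth])
  then show False
    using internal_dsum_finitely_many_below[OF dsum orth_P] by blast
qed

theorem mainTheorem16:
  fixes M :: "(nat \<Rightarrow> bit) set"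
  assumes "maximal_ideal M"
    and "{f :: nat \<Rightarrow> bit. finite {n. f n \<noteq> 0}} \<subseteq> M"
  shows "local_units M M \<and> \<not> enough_idempotents M"
proof
  have "is_ideal M" using assms(1) by (simp add: maximal_ideal_def)
  then show "local_units M M" by (rule local_units_of_idempotent_ideal) simp
  show "\<not> enough_idempotents M" using assms by (rule not_enough_idempotents_of_maximal)
qed

end
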